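(* The maps $U_r$ for $r \le m$ are injective if and only if $U_m$ is injective.
   Context: Let $A \ge B \ge C \ge 1$ be integers, let $\Bbbk$ be a field, and let $R = \Bbbk[x,y,z]/(x^A,y^B,z^C)$ with its standard grading ($x,y,z$ of degree one), $R = \bigoplus_{r=0}^{e} R_r$ where $e := A+B+C-3$. For each $r$, let $U_r : R_r \to R_{r+1}$ be the map given by multiplication by $x+y+z$. Let $m := \lfloor \frac{e-1}{2} \rfloor$, so that $U_m$ is a map closest to the middle of $R$. *)

theory Defs
  imports Main
begin

text \<open>R = k[x,y,z]/(x^A,y^B,z^C). The degree-r component R_r has as k-basis the
monomials x^a y^b z^c with a<A, b<B, c<C, a+b+c=r. An element of R_r is represented
by its coefficient function on exponent triples, supported on these monomials.
Degrees are integers; R_r = 0 for r < 0.\<close>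

definition mons :: "nat \<Rightarrow> nat \<Rightarrow> nat \<Rightarrow> int \<Rightarrow> (nat \<times> nat \<times> nat) set" where
  "mons A B C r = {(a,b,c). a < A \<and> b < B \<and> c < C \<and> int (a+b+c) = r}"

definition Rdeg :: "nat \<Rightarrow> nat \<Rightarrow> nat \<Rightarrow> int \<Rightarrow> (nat \<times> nat \<times> nat \<Rightarrow> 'k::field) set" where
  "Rdeg A B C r = {f. \<forall>p. p \<notin> mons A B C r \<longrightarrow> f p = 0}"

text \<open>Multiplication by x+y+z, R_r \<rightarrow> R_(r+1): the coefficient of x^a y^b z^c in
(x+y+z) f is f(a-1,b,c)+f(a,b-1,c)+f(a,b,c-1) (missing terms zero), and monomials
outside the box vanish in the quotient.\<close>

definition Umap :: "nat \<Rightarrow> nat \<Rightarrow> nat \<Rightarrow> int \<Rightarrow> (nat \<times> nat \<times> nat \<Rightarrow> 'k::field)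
    \<Rightarrow> (nat \<times> nat \<times> nat \<Rightarrow> 'k)" where
  "Umap A B C r f = (\<lambda>(a,b,c).
     if (a,b,c) \<in> mons A B C (r+1) then
       (if 0 < a then f (a-1,b,c) else 0) +
       (if 0 < b then f (a,b-1,c) else 0) +
       (if 0 < c then f (a,b,c-1) else 0)
     else 0)"

end

theory Submission
  imports Defs "HOL-Library.Function_Algebras"
begin

text \<open>Multiplication by a monomial commutes with multiplication by x+y+z. So if f is a
nonzero element of R_r killed by x+y+z, with a nonzero coefficient at x^a y^b z^c, then
for r \<le> m \<le> e there is a monomial \<mu> of degree m - r with \<mu> x^a y^b z^c still inside the
box (the box leaves room e - r above x^a y^b z^c), and \<mu> f is a nonzero element of R_m
killed by x+y+z. Hence injectivity of U_m forces injectivity of every U_r with r \<le> m;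
only m \<le> e is needed, not the ordering of A, B, C.\<close>

definition monomial_mult :: "nat \<Rightarrow> nat \<Rightarrow> nat \<Rightarrow> nat \<times> nat \<times> nat
    \<Rightarrow> (nat \<times> nat \<times> nat \<Rightarrow> 'k::field) \<Rightarrow> (nat \<times> nat \<times> nat \<Rightarrow> 'k)" where
  "monomial_mult A B C = (\<lambda>(i,j,k) f (a,b,c).
     if a < A \<and> b < B \<and> c < C \<and> i \<le> a \<and> j \<le> b \<and> k \<le> c then f (a-i,b-j,c-k) else 0)"

lemma monomial_mult_Rdeg:
  "f \<in> Rdeg A B C r \<Longrightarrow> monomial_mult A B C (i,j,k) f \<in> Rdeg A B C (r + int (i+j+k))"
  by (auto simp: Rdeg_def monomial_mult_def mons_def)

lemma monomial_mult_zero [simp]: "monomial_mult A B C ijk 0 = 0"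
  by (auto simp: monomial_mult_def split: prod.split)

lemma monomial_mult_apply:
  "a + i < A \<Longrightarrow> b + j < B \<Longrightarrow> c + k < C \<Longrightarrow>
   monomial_mult A B C (i,j,k) f (a+i,b+j,c+k) = f (a,b,c)"
  by (simp add: monomial_mult_def)

lemma monomial_mult_eq_0:
  "\<not> (a < A \<and> b < B \<and> c < C \<and> i \<le> a \<and> j \<le> b \<and> k \<le> c) \<Longrightarrow>
   monomial_mult A B C (i,j,k) f (a,b,c) = 0"
  by (auto simp: monomial_mult_def)

lemma Umap_monomial_mult:
  "Umap A B C (r + int (i+j+k)) (monomial_mult A B C (i,j,k) f)
     = monomial_mult A B C (i,j,k) (Umap A B C r f)"
proof (rule ext, clarify)
  fix a b c
  show "Umap A B C (r + int (i+j+k)) (monomial_mult A B C (i,j,k) f) (a,b,c)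
     = monomial_mult A B C (i,j,k) (Umap A B C r f) (a,b,c)"
  proof (cases "i \<le> a \<and> j \<le> b \<and> k \<le> c")
    case True
    then obtain a' b' c' where abc: "a = a' + i" "b = b' + j" "c = c' + k"
      using le_Suc_ex by (metis add.commute)
    show ?thesis
    proof (cases "a < A \<and> b < B \<and> c < C")
      case box: True
      then have in_box: "a' + i < A" "b' + j < B" "c' + k < C"
        unfolding abc by auto
      have "(if 0 < a then monomial_mult A B C (i,j,k) f (a-1,b,c) else 0)
          = (if 0 < a' then f (a'-1,b',c') else 0)"
        using box unfolding abc
        by (cases a') (auto simp: monomial_mult_apply intro!: monomial_mult_eq_0)
      moreover have "(if 0 < b then monomial_mult A B C (i,j,k) f (a,b-1,c) else 0)
          = (if 0 < b' then f (a',b'-1,c') else 0)"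
        using box unfolding abc
        by (cases b') (auto simp: monomial_mult_apply intro!: monomial_mult_eq_0)
      moreover have "(if 0 < c then monomial_mult A B C (i,j,k) f (a,b,c-1) else 0)
          = (if 0 < c' then f (a',b',c'-1) else 0)"
        using box unfolding abc
        by (cases c') (auto simp: monomial_mult_apply intro!: monomial_mult_eq_0)
      moreover have "((a,b,c) \<in> mons A B C (r + int (i+j+k) + 1))
          = ((a',b',c') \<in> mons A B C (r + 1))"
        using box unfolding abc mons_def by auto
      ultimately show ?thesis
        using box unfolding abc monomial_mult_apply[OF in_box]
        by (simp only: Umap_def prod.case)
    next
      case False
      then have "(a,b,c) \<notin> mons A B C (r + int (i+j+k) + 1)"
        by (auto simp: mons_def)
      then have "Umap A B C (r + int (i+j+k)) (monomial_mult A B C (i,j,k) f) (a,b,c) = 0"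
        by (simp add: Umap_def)
      moreover have "monomial_mult A B C (i,j,k) (Umap A B C r f) (a,b,c) = 0"
        using False by (blast intro: monomial_mult_eq_0)
      ultimately show ?thesis
        by simp
    qed
  next
    case False
    then have vanish: "monomial_mult A B C (i,j,k) f (a-1,b,c) = 0"
      "monomial_mult A B C (i,j,k) f (a,b-1,c) = 0"
      "monomial_mult A B C (i,j,k) f (a,b,c-1) = 0"
      by (auto intro!: monomial_mult_eq_0)
    then have "Umap A B C (r + int (i+j+k)) (monomial_mult A B C (i,j,k) f) (a,b,c) = 0"
      unfolding Umap_def prod.case vanish by simp
    moreover have "monomial_mult A B C (i,j,k) (Umap A B C r f) (a,b,c) = 0"
      using False by (blast intro: monomial_mult_eq_0)
    ultimately show ?thesis
      by simp
  qed
qed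

lemma Umap_diff: "Umap A B C r (f - g) = Umap A B C r f - Umap A B C r g"
  by (rule ext) (auto simp: Umap_def)

lemma inj_on_Umap_iff:
  "inj_on (Umap A B C r :: _ \<Rightarrow> _ \<Rightarrow> 'k::field) (Rdeg A B C r) \<longleftrightarrow>
   (\<forall>f\<in>Rdeg A B C r. Umap A B C r f = 0 \<longrightarrow> f = (0 :: _ \<Rightarrow> 'k))"
proof -
  have "Umap A B C r (0 :: _ \<Rightarrow> 'k) = 0" "(0 :: _ \<Rightarrow> 'k) \<in> Rdeg A B C r"
    by (auto simp: Umap_def Rdeg_def)
  moreover have "f - g \<in> Rdeg A B C r" if "f \<in> Rdeg A B C r" "g \<in> Rdeg A B C r"
    for f g :: "_ \<Rightarrow> 'k"
    using that by (auto simp: Rdeg_def)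
  ultimately show ?thesis
    unfolding inj_on_def by (metis Umap_diff eq_iff_diff_eq_0)
qed

lemma nat_le_sum3_split:
  "n \<le> p + q + s \<Longrightarrow> \<exists>i j k. i \<le> p \<and> j \<le> q \<and> k \<le> s \<and> i + j + k = (n::nat)"
  by (rule exI[of _ "min n p"], rule exI[of _ "min (n - min n p) q"],
      rule exI[of _ "n - min n p - min (n - min n p) q"]) auto

lemma inj_on_Umap_lower_degree:
  fixes r m :: int
  assumes "r \<le> m" and "m \<le> int (A+B+C) - 3"
    and inj_m: "inj_on (Umap A B C m :: _ \<Rightarrow> _ \<Rightarrow> 'k::field) (Rdeg A B C m)"
  shows "inj_on (Umap A B C r :: _ \<Rightarrow> _ \<Rightarrow> 'k) (Rdeg A B C r)"
  unfolding inj_on_Umap_iff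
proof (intro ballI impI)
  fix f :: "_ \<Rightarrow> 'k"
  assume f: "f \<in> Rdeg A B C r" and ker: "Umap A B C r f = 0"
  show "f = 0"
  proof (rule ccontr)
    assume "f \<noteq> 0"
    then obtain a b c where fabc: "f (a,b,c) \<noteq> 0"
      by (metis ext prod_cases3 zero_fun_def)
    then have abc: "a < A" "b < B" "c < C" "int (a+b+c) = r"
      using f by (auto simp: Rdeg_def mons_def)
    have "nat (m - r) \<le> (A - a - 1) + (B - b - 1) + (C - c - 1)"
      using abc assms(1,2) by linarith
    then obtain i j k where "i \<le> A - a - 1" "j \<le> B - b - 1" "k \<le> C - c - 1"
        and "i + j + k = nat (m - r)"
      using nat_le_sum3_split by blast
    then have in_box: "a + i < A" "b + j < B" "c + k < C" and m: "m = r + int (i+j+k)"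
      using abc assms(1) by auto
    let ?g = "monomial_mult A B C (i,j,k) f"
    have "?g \<in> Rdeg A B C m"
      using monomial_mult_Rdeg[OF f] m by simp
    moreover have "Umap A B C m ?g = 0"
      unfolding m Umap_monomial_mult ker by simp
    moreover have "?g \<noteq> 0"
      using monomial_mult_apply[OF in_box] fabc by (metis zero_fun_apply)
    ultimately show False
      using inj_m unfolding inj_on_Umap_iff by blast
  qed
qed

theorem corollary2:
  fixes A B C :: nat and m :: int
  assumes "A \<ge> B" and "B \<ge> C" and "C \<ge> 1"
    and "m = (int (A+B+C) - 3 - 1) div 2"
  shows "(\<forall>r\<le>m. inj_on (Umap A B C r :: _ \<Rightarrow> _ \<Rightarrow> 'k::field) (Rdeg A B C r))
     \<longleftrightarrow> inj_on (Umap A B C m :: _ \<Rightarrow> _ \<Rightarrow> 'k::field) (Rdeg A B C m)"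
proof -
  have "m \<le> int (A+B+C) - 3"
    using assms by linarith
  then show ?thesis
    using inj_on_Umap_lower_degree by blast
qed

end
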